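(* Let $A$ be a domain equipped with an ultrametric absolute value $|\cdot|$ and let $A_0$ be a dense subring of $A$ such that $A=A_0+gA$ for every nonzero $g\in A_0$. Put $E=\operatorname{Quot}(A)$, $E_0=\operatorname{Quot}(A_0)$, and let $E_1,E_2$ be subfields of $E$ with $E_0\subseteq E_2$. Let $n\in\mathbb{N}$ and suppose: (i) the localization $(A_0\setminus\{0\})^{-1}A$ equals $E$; (ii) for every $b\in\operatorname{Mat}_n(A)$ with $|b-\mathbb{1}|<1$ there exist $b_1\in\operatorname{GL}_n(E_1)$ and $b_2\in\operatorname{GL}_n(E_2)$ with $b=b_1b_2$. Then $\operatorname{GL}_n(E)=\operatorname{GL}_n(E_1)\cdot\operatorname{GL}_n(E_2)$.
   Context: For a matrix $(a_{ij})$ over $A$, $|(a_{ij})|=\max_{i,j}|a_{ij}|$; $\mathbb{1}$ denotes the $n\times n$ identity matrix. "Dense" refers to the topology induced by $|\cdot|$. *)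

theory Defs
  imports Main "Jordan_Normal_Form.Matrix"
begin

text \<open>The fraction field E is modelled as the ambient field type; subrings/subfields as subsets.\<close>

definition is_subring :: "'a::field set \<Rightarrow> bool" where
  "is_subring S \<longleftrightarrow> 0 \<in> S \<and> 1 \<in> S \<and>
     (\<forall>x\<in>S. \<forall>y\<in>S. x + y \<in> S \<and> x - y \<in> S \<and> x * y \<in> S)"

definition is_subfield :: "'a::field set \<Rightarrow> bool" where
  "is_subfield S \<longleftrightarrow> is_subring S \<and> (\<forall>x\<in>S. x \<noteq> 0 \<longrightarrow> inverse x \<in> S)"

definition Quot :: "'a::field set \<Rightarrow> 'a set" where
  "Quot S = {x / y | x y. x \<in> S \<and> y \<in> S \<and> y \<noteq> 0}"

definition ultrametric_abs_on :: "'a::field set \<Rightarrow> ('a \<Rightarrow> real) \<Rightarrow> bool" where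
  "ultrametric_abs_on A av \<longleftrightarrow>
     (\<forall>x\<in>A. av x \<ge> 0 \<and> (av x = 0 \<longleftrightarrow> x = 0)) \<and>
     (\<forall>x\<in>A. \<forall>y\<in>A. av (x * y) = av x * av y) \<and>
     (\<forall>x\<in>A. \<forall>y\<in>A. av (x + y) \<le> max (av x) (av y))"

definition dense_in :: "('a::field \<Rightarrow> real) \<Rightarrow> 'a set \<Rightarrow> 'a set \<Rightarrow> bool" where
  "dense_in av A0 A \<longleftrightarrow> (\<forall>x\<in>A. \<forall>\<epsilon>>0. \<exists>y\<in>A0. av (x - y) < \<epsilon>)"

definition Mat_over :: "nat \<Rightarrow> 'a::field set \<Rightarrow> 'a mat set" where
  "Mat_over n S = {M \<in> carrier_mat n n. elements_mat M \<subseteq> S}"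

definition GL_over :: "nat \<Rightarrow> 'a::field set \<Rightarrow> 'a mat set" where
  "GL_over n S = {M \<in> Mat_over n S. \<exists>N \<in> Mat_over n S. M * N = 1\<^sub>m n \<and> N * M = 1\<^sub>m n}"

text \<open>|M| = max of |M_ij|; for n = 0 the max over the empty set is taken as 0.\<close>
definition mat_abs_lt_1 :: "('a::field \<Rightarrow> real) \<Rightarrow> nat \<Rightarrow> 'a mat \<Rightarrow> bool" where
  "mat_abs_lt_1 av n M \<longleftrightarrow> (\<forall>i<n. \<forall>j<n. av ((M - 1\<^sub>m n) $$ (i, j)) < 1)"

end

theory Submission
  imports Defs "Jordan_Normal_Form.Determinant"
begin

(*
  Let b be invertible over E, with inverse b'.  Clear denominators: since every
  element of E is a/g with a in A and 0 <> g in A0, there is 0 <> k in A0 with k*b and k*b'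
  over A.  Using A = A0 + k^2 A and density of A0, each entry of k*b' can be written as
  y + k^2 t with y in A0 and |t| as small as we like.  The matrix c with entries y/k lies over
  Quot A0, hence over E2, and c = b' - k*T, so b*c = 1 - (k*b)*T.  By the ultrametric
  inequality, |b*c - 1| < 1 once |T| is small compared to |k*b|, so by hypothesis (ii)
  b*c = b1*b2.  Then c is invertible over E2 and b = b1 * (b2 * c^-1).
*)

section \<open>Matrices over subrings and subfields\<close>

lemma Mat_over_iff:
  "M \<in> Mat_over n S \<longleftrightarrow> M \<in> carrier_mat n n \<and> (\<forall>i<n. \<forall>j<n. M $$ (i,j) \<in> S)"
  unfolding Mat_over_def by (auto elim!: elements_matD[elim_format])

lemma subring_sum:
  assumes "is_subring S" and "\<And>i. i \<in> I \<Longrightarrow> f i \<in> S"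
  shows "sum f I \<in> S"
proof (cases "finite I")
  case True then show ?thesis using assms(2)
    by (induction I rule: finite_induct) (use assms(1) in \<open>auto simp: is_subring_def\<close>)
qed (use assms(1) in \<open>simp add: is_subring_def\<close>)

lemma subring_prod:
  assumes "is_subring S" and "\<And>i. i \<in> I \<Longrightarrow> f i \<in> S"
  shows "prod f I \<in> S"
proof (cases "finite I")
  case True then show ?thesis using assms(2)
    by (induction I rule: finite_induct) (use assms(1) in \<open>auto simp: is_subring_def\<close>)
qed (use assms(1) in \<open>simp add: is_subring_def\<close>)

lemma subring_uminus: "is_subring S \<Longrightarrow> x \<in> S \<Longrightarrow> - x \<in> S"
  unfolding is_subring_def by (metis diff_0)

lemma subring_mult: "is_subring S \<Longrightarrow> x \<in> S \<Longrightarrow> y \<in> S \<Longrightarrow> x * y \<in> S"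
  unfolding is_subring_def by auto

lemma subring_power: "is_subring S \<Longrightarrow> x \<in> S \<Longrightarrow> x ^ k \<in> S"
  using subring_prod[of S "{..<k}" "\<lambda>_. x"] by simp

lemma Mat_over_mult:
  assumes S: "is_subring S" and "M \<in> Mat_over n S" and "N \<in> Mat_over n S"
  shows "M * N \<in> Mat_over n S"
  using assms(2,3) unfolding Mat_over_iff
  by (auto simp: scalar_prod_def intro!: subring_sum[OF S] subring_mult[OF S])

lemma Mat_over_minus:
  assumes "is_subring S" and "M \<in> Mat_over n S" and "N \<in> Mat_over n S"
  shows "M - N \<in> Mat_over n S"
  using assms unfolding Mat_over_iff is_subring_def by auto

lemma one_Mat_over: "is_subring S \<Longrightarrow> 1\<^sub>m n \<in> Mat_over n S"
  unfolding Mat_over_iff is_subring_def by auto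

text \<open>The Leibniz formula shows that determinants of matrices over a subring stay in it.\<close>

lemma det_Mat_over:
  assumes S: "is_subring S" and M: "M \<in> Mat_over n S"
  shows "det M \<in> S"
proof -
  have Mc: "M \<in> carrier_mat n n" and el: "\<And>i j. i < n \<Longrightarrow> j < n \<Longrightarrow> M $$ (i,j) \<in> S"
    using M unfolding Mat_over_iff by auto
  have sign: "signof p \<in> S" for p
    using S subring_uminus[OF S, of 1] unfolding sign_def is_subring_def by auto
  show ?thesis unfolding det_def'[OF Mc]
    by (intro subring_sum[OF S] subring_mult[OF S] sign subring_prod[OF S] el)
      (auto intro: permutes_in_image)
qed

lemma adj_Mat_over:
  assumes S: "is_subring S" and M: "M \<in> Mat_over n S"
  shows "adj_mat M \<in> Mat_over n S"
proof -
  have Mc: "M \<in> carrier_mat n n" using M unfolding Mat_over_iff by auto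
  have minor: "mat_delete M j i \<in> Mat_over (n - 1) S" if "i < n" "j < n" for i j
    using M mat_delete_carrier[OF Mc] unfolding Mat_over_iff
    by (auto simp: mat_delete_def)
  have "cofactor M j i \<in> S" if "i < n" "j < n" for i j
    unfolding cofactor_def using subring_uminus[OF S, of 1] S
    by (intro subring_mult[OF S] subring_power[OF S] det_Mat_over[OF S minor[OF that]])
      (auto simp: is_subring_def)
  then show ?thesis using adj_mat(1)[OF Mc] Mc unfolding Mat_over_iff by (auto simp: adj_mat_def)
qed

lemma Mat_over_mono: "S \<subseteq> T \<Longrightarrow> Mat_over n S \<subseteq> Mat_over n T"
  unfolding Mat_over_def by blast

lemma GL_over_mono: "S \<subseteq> T \<Longrightarrow> GL_over n S \<subseteq> GL_over n T"
  unfolding GL_over_def Mat_over_def by blast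

lemma GL_over_carrier: "M \<in> GL_over n S \<Longrightarrow> M \<in> carrier_mat n n"
  unfolding GL_over_def Mat_over_def by auto

lemma GL_over_mult:
  assumes S: "is_subring S" and M: "M \<in> GL_over n S" and N: "N \<in> GL_over n S"
  shows "M * N \<in> GL_over n S"
proof -
  obtain M' where M': "M' \<in> Mat_over n S" "M * M' = 1\<^sub>m n" "M' * M = 1\<^sub>m n"
    using M unfolding GL_over_def by auto
  obtain N' where N': "N' \<in> Mat_over n S" "N * N' = 1\<^sub>m n" "N' * N = 1\<^sub>m n"
    using N unfolding GL_over_def by auto
  have c: "M \<in> carrier_mat n n" "N \<in> carrier_mat n n" "M' \<in> carrier_mat n n" "N' \<in> carrier_mat n n"
    using M N M' N' unfolding GL_over_def Mat_over_def by auto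
  have "M * N * (N' * M') = M * (N * N') * M'"
    using c by (simp add: assoc_mult_mat[of _ n n _ n _ n])
  then have right: "M * N * (N' * M') = 1\<^sub>m n" using c N' M' by simp
  have "N' * M' * (M * N) = N' * (M' * M) * N"
    using c by (simp add: assoc_mult_mat[of _ n n _ n _ n])
  then have left: "N' * M' * (M * N) = 1\<^sub>m n" using c N' M' by simp
  show ?thesis
    using right left Mat_over_mult[OF S] M N M'(1) N'(1) unfolding GL_over_def by blast
qed

lemma det_GL_over_nonzero: "M \<in> GL_over n S \<Longrightarrow> det M \<noteq> 0"
proof -
  assume "M \<in> GL_over n S"
  then obtain N where "M \<in> carrier_mat n n" "N \<in> carrier_mat n n" "M * N = 1\<^sub>m n"
    unfolding GL_over_def Mat_over_def by auto
  then have "det M * det N = 1" using det_mult[of M n N] by simp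
  then show "det M \<noteq> 0" by auto
qed

text \<open>Over a subfield, the adjugate formula inverts any matrix of nonzero determinant.\<close>

lemma GL_over_if_det_nonzero:
  assumes S: "is_subfield S" and M: "M \<in> Mat_over n S" and d: "det M \<noteq> 0"
  shows "M \<in> GL_over n S"
proof -
  have S': "is_subring S" using S unfolding is_subfield_def by auto
  have Mc: "M \<in> carrier_mat n n" using M unfolding Mat_over_iff by auto
  let ?N = "inverse (det M) \<cdot>\<^sub>m adj_mat M"
  have "inverse (det M) \<in> S" using S det_Mat_over[OF S' M] d unfolding is_subfield_def by auto
  then have "?N \<in> Mat_over n S"
    using adj_Mat_over[OF S' M] unfolding Mat_over_iff by (auto intro!: subring_mult[OF S'])
  moreover have "M * ?N = 1\<^sub>m n" using adj_mat[OF Mc] d Mc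
    by (simp add: mult_smult_distrib[of _ n n _ n]) (rule eq_matI, auto)
  moreover have "?N * M = 1\<^sub>m n" using adj_mat[OF Mc] d Mc
    by (simp add: mult_smult_assoc_mat[of _ n n _ n]) (rule eq_matI, auto)
  ultimately show ?thesis using M unfolding GL_over_def by blast
qed

section \<open>Ultrametric absolute values\<close>

text \<open>|-x| = |x|, since |-1|^2 = |1| = 1.\<close>

lemma ultrametric_uminus:
  assumes U: "ultrametric_abs_on A av" and S: "is_subring A" and x: "x \<in> A"
  shows "av (- x) = av x"
proof -
  have one: "1 \<in> A" and m1: "-1 \<in> A"
    using S subring_uminus[OF S, of 1] unfolding is_subring_def by auto
  have mul: "\<And>x y. x \<in> A \<Longrightarrow> y \<in> A \<Longrightarrow> av (x * y) = av x * av y"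
    using U unfolding ultrametric_abs_on_def by blast
  have "av 1 \<noteq> 0" using U one unfolding ultrametric_abs_on_def by auto
  then have av1: "av 1 = 1" using mul[OF one one] by simp
  have "av (-1) * av (-1) = 1" using mul[OF m1 m1] av1 by simp
  moreover have "av (-1) \<ge> 0" using U m1 unfolding ultrametric_abs_on_def by auto
  ultimately have "av (-1) = 1"
    by (metis power2_eq_iff_nonneg power2_eq_square zero_le_one one_power2)
  then show ?thesis using mul[OF m1 x] by simp
qed

lemma ultrametric_sum_less:
  assumes U: "ultrametric_abs_on A av" and S: "is_subring A" and "finite I" and "r > 0"
    and "\<And>i. i \<in> I \<Longrightarrow> f i \<in> A \<and> av (f i) < r"
  shows "av (sum f I) < r"
  using assms(3,5)
proof (induction I rule: finite_induct)
  case empty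
  have "av 0 = 0" using U S unfolding ultrametric_abs_on_def is_subring_def by auto
  then show ?case using \<open>r > 0\<close> by simp
next
  case (insert x F)
  have "sum f F \<in> A" using insert by (intro subring_sum[OF S]) auto
  then have "av (f x + sum f F) \<le> max (av (f x)) (av (sum f F))"
    using U insert unfolding ultrametric_abs_on_def by auto
  moreover have "av (f x) < r" "av (sum f F) < r" using insert by auto
  ultimately have "av (f x + sum f F) < r" by linarith
  then show ?case using insert by simp
qed

lemma ultrametric_mat_mult_less_1:
  assumes U: "ultrametric_abs_on A av" and S: "is_subring A"
    and X: "X \<in> Mat_over n A" and Y: "Y \<in> Mat_over n A"
    and small: "\<And>i l j. i < n \<Longrightarrow> l < n \<Longrightarrow> j < n \<Longrightarrow> av (X $$ (i,l)) * av (Y $$ (l,j)) < 1"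
    and ij: "i < n" "j < n"
  shows "av ((X * Y) $$ (i,j)) < 1"
proof -
  have c: "X \<in> carrier_mat n n" "Y \<in> carrier_mat n n" using X Y unfolding Mat_over_iff by auto
  have "(X * Y) $$ (i,j) = (\<Sum>l<n. X $$ (i,l) * Y $$ (l,j))"
    using c ij by (simp add: scalar_prod_def atLeast0LessThan)
  moreover have "av (\<Sum>l<n. X $$ (i,l) * Y $$ (l,j)) < 1"
  proof (rule ultrametric_sum_less[OF U S])
    fix l assume "l \<in> {..<n}"
    then have "X $$ (i,l) \<in> A" "Y $$ (l,j) \<in> A" using X Y ij unfolding Mat_over_iff by auto
    then show "X $$ (i,l) * Y $$ (l,j) \<in> A \<and> av (X $$ (i,l) * Y $$ (l,j)) < 1"
      using U small \<open>l \<in> {..<n}\<close> ij subring_mult[OF S]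
      unfolding ultrametric_abs_on_def by auto
  qed auto
  ultimately show ?thesis by simp
qed

section \<open>Approximation by matrices over the dense subring\<close>

lemma approx_modulo:
  assumes S: "is_subring A" and S0: "is_subring A0" and sub: "A0 \<subseteq> A"
    and dense: "dense_in av A0 A"
    and split: "A = {a0 + g * a | a0 a. a0 \<in> A0 \<and> a \<in> A}" and g: "g \<in> A0"
    and a: "a \<in> A" and "\<epsilon> > 0"
  shows "\<exists>y\<in>A0. \<exists>t\<in>A. a = y + g * t \<and> av t < \<epsilon>"
proof -
  obtain a0 a' where a0: "a0 \<in> A0" and a': "a' \<in> A" and a_eq: "a = a0 + g * a'"
    using a split by blast
  obtain y' where y': "y' \<in> A0" and close: "av (a' - y') < \<epsilon>"
    using dense a' \<open>\<epsilon> > 0\<close> unfolding dense_in_def by blast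
  have "a0 + g * y' \<in> A0" using S0 a0 g y' unfolding is_subring_def by auto
  moreover have "a' - y' \<in> A" using S a' y' sub unfolding is_subring_def by auto
  moreover have "a = (a0 + g * y') + g * (a' - y')" using a_eq by (simp add: algebra_simps)
  ultimately show ?thesis using close by blast
qed

lemma common_denominator:
  assumes S0: "is_subring A0" and sub: "A0 \<subseteq> A" and S: "is_subring A" and "finite F"
    and frac: "\<And>x. x \<in> F \<Longrightarrow> \<exists>a g. a \<in> A \<and> g \<in> A0 \<and> g \<noteq> 0 \<and> x = a / g"
  shows "\<exists>k \<in> A0. k \<noteq> 0 \<and> (\<forall>x\<in>F. k * x \<in> A)"
  using assms(4) frac
proof (induction F rule: finite_induct)
  case empty then show ?case using S0 by (intro bexI[of _ 1]) (auto simp: is_subring_def)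
next
  case (insert x F)
  then obtain k where k: "k \<in> A0" "k \<noteq> 0" "\<forall>y\<in>F. k * y \<in> A" by auto
  obtain a g where ag: "a \<in> A" "g \<in> A0" "g \<noteq> 0" "x = a / g" using insert by blast
  have "k * a \<in> A" using subring_mult[OF S] k(1) ag(1) sub by auto
  moreover have "(k * g) * x = k * a" using ag(3,4) by (simp add: mult.assoc)
  ultimately have "(k * g) * x \<in> A" by (simp only:)
  moreover have "(k * g) * y \<in> A" if "y \<in> F" for y
  proof -
    have "g * (k * y) \<in> A" using k(3) ag(2) sub that subring_mult[OF S] by auto
    then show ?thesis by (simp add: ac_simps)
  qed
  moreover have "k * g \<in> A0" "k * g \<noteq> 0" using k ag subring_mult[OF S0] by auto
  ultimately show ?case by blast
qed

lemma uniform_threshold: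
  fixes w :: "nat \<Rightarrow> nat \<Rightarrow> real"
  shows "\<exists>\<epsilon>>0. \<forall>i<n. \<forall>l<n. \<forall>r. 0 \<le> r \<and> r < \<epsilon> \<longrightarrow> w i l * r < 1"
proof -
  define B where "B = Max (insert 0 ((\<lambda>(i,l). w i l) ` ({..<n} \<times> {..<n})))"
  have B: "w i l \<le> B" if "i < n" "l < n" for i l
    unfolding B_def using that by (intro Max_ge) auto
  have B0: "B \<ge> 0" unfolding B_def by (intro Max_ge) auto
  have "w i l * r < 1" if "i < n" "l < n" "0 \<le> r" "r < 1 / (B + 1)" for i l r
  proof -
    have "w i l * r \<le> B * r" using B[OF that(1,2)] that(3) by (rule mult_right_mono)
    also have "\<dots> \<le> B * (1 / (B + 1))" using B0 that(4) by (intro mult_left_mono) auto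
    also have "\<dots> < 1" using B0 by (simp add: field_simps)
    finally show ?thesis .
  qed
  moreover have "1 / (B + 1) > 0" using B0 by simp
  ultimately show ?thesis by blast
qed

lemma perturbed_inverse_close_to_one:
  assumes S: "is_subring A" and U: "ultrametric_abs_on A av"
    and bc: "b \<in> carrier_mat n n" and b'c: "b' \<in> carrier_mat n n" and inv: "b * b' = 1\<^sub>m n"
    and X: "k \<cdot>\<^sub>m b \<in> Mat_over n A" and T: "T \<in> Mat_over n A"
    and small: "\<And>i l j. i < n \<Longrightarrow> l < n \<Longrightarrow> j < n \<Longrightarrow>
      av ((k \<cdot>\<^sub>m b) $$ (i,l)) * av (T $$ (l,j)) < 1"
  shows "b * (b' - k \<cdot>\<^sub>m T) \<in> Mat_over n A \<and> mat_abs_lt_1 av n (b * (b' - k \<cdot>\<^sub>m T))"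
proof -
  have Tc: "T \<in> carrier_mat n n" using T unfolding Mat_over_iff by simp
  have eq: "b * (b' - k \<cdot>\<^sub>m T) = 1\<^sub>m n - (k \<cdot>\<^sub>m b) * T"
    using bc b'c Tc inv
    by (simp add: mult_minus_distrib_mat[of _ n n] mult_smult_distrib[of _ n n]
        mult_smult_assoc_mat[of _ n n])
  have XT: "(k \<cdot>\<^sub>m b) * T \<in> Mat_over n A" using Mat_over_mult[OF S X T] .
  have "mat_abs_lt_1 av n (1\<^sub>m n - (k \<cdot>\<^sub>m b) * T)"
    unfolding mat_abs_lt_1_def
  proof (intro allI impI)
    fix i j assume ij: "i < n" "j < n"
    have "(1\<^sub>m n - (k \<cdot>\<^sub>m b) * T - 1\<^sub>m n) $$ (i,j) = - (((k \<cdot>\<^sub>m b) * T) $$ (i,j))"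
      using ij bc Tc by simp
    moreover have "((k \<cdot>\<^sub>m b) * T) $$ (i,j) \<in> A" using XT ij unfolding Mat_over_iff by simp
    ultimately show "av ((1\<^sub>m n - (k \<cdot>\<^sub>m b) * T - 1\<^sub>m n) $$ (i,j)) < 1"
      using ultrametric_uminus[OF U S] ultrametric_mat_mult_less_1[OF U S X T small ij] by simp
  qed
  moreover have "1\<^sub>m n - (k \<cdot>\<^sub>m b) * T \<in> Mat_over n A"
    by (intro Mat_over_minus[OF S] one_Mat_over[OF S] XT)
  ultimately show ?thesis unfolding eq by blast
qed

lemma approximate_inverse:
  fixes A A0 :: "'a::field set" and av :: "'a \<Rightarrow> real"
  assumes S: "is_subring A" and U: "ultrametric_abs_on A av"
    and S0: "is_subring A0" and sub: "A0 \<subseteq> A" and dense: "dense_in av A0 A"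
    and split: "\<forall>g\<in>A0. g \<noteq> 0 \<longrightarrow> A = {a0 + g * a | a0 a. a0 \<in> A0 \<and> a \<in> A}"
    and frac: "{a / g | a g. a \<in> A \<and> g \<in> A0 \<and> g \<noteq> 0} = UNIV"
    and b: "b \<in> GL_over n UNIV"
  shows "\<exists>c \<in> Mat_over n (Quot A0). b * c \<in> Mat_over n A \<and> mat_abs_lt_1 av n (b * c)"
proof -
  obtain b' where bc: "b \<in> carrier_mat n n" and b'c: "b' \<in> carrier_mat n n"
    and inv: "b * b' = 1\<^sub>m n"
    using b unfolding GL_over_def Mat_over_def by auto
  have fraction: "\<exists>a g. a \<in> A \<and> g \<in> A0 \<and> g \<noteq> 0 \<and> x = a / g" for x
    using frac by blast
  have "finite (elements_mat b \<union> elements_mat b')" by (simp add: elements_mat_def)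
  from common_denominator[OF S0 sub S this fraction]
  obtain k where k: "k \<in> A0" "k \<noteq> 0"
    and kF: "\<forall>x\<in>elements_mat b \<union> elements_mat b'. k * x \<in> A"
    by blast
  have X: "k \<cdot>\<^sub>m b \<in> Mat_over n A" using kF bc unfolding Mat_over_iff by auto
  have kb': "k * b' $$ (i,j) \<in> A" if "i < n" "j < n" for i j using kF b'c that by auto
  obtain \<epsilon> where "\<epsilon> > 0" and \<epsilon>:
    "\<And>i l r. i < n \<Longrightarrow> l < n \<Longrightarrow> 0 \<le> r \<Longrightarrow> r < \<epsilon> \<Longrightarrow> av ((k \<cdot>\<^sub>m b) $$ (i,l)) * r < 1"
    using uniform_threshold[of n "\<lambda>i l. av ((k \<cdot>\<^sub>m b) $$ (i,l))"] by blast
  have kk: "k * k \<in> A0" "k * k \<noteq> 0" using k subring_mult[OF S0] by auto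
  have split_kk: "A = {a0 + (k * k) * a | a0 a. a0 \<in> A0 \<and> a \<in> A}" using split kk by blast
  have "\<forall>x\<in>A. \<exists>y\<in>A0. \<exists>t\<in>A. x = y + (k * k) * t \<and> av t < \<epsilon>"
    using approx_modulo[OF S S0 sub dense split_kk kk(1) _ \<open>\<epsilon> > 0\<close>] by blast
  then obtain y t where yt: "\<And>x. x \<in> A \<Longrightarrow>
      y x \<in> A0 \<and> t x \<in> A \<and> x = y x + (k * k) * t x \<and> av (t x) < \<epsilon>"
    by metis
  define c where "c = mat n n (\<lambda>(i,j). y (k * b' $$ (i,j)) / k)"
  define T where "T = mat n n (\<lambda>(i,j). t (k * b' $$ (i,j)))"
  have T: "T \<in> Mat_over n A" using yt kb' unfolding T_def Mat_over_iff by auto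
  have c: "c \<in> Mat_over n (Quot A0)"
    using yt kb' k unfolding c_def Mat_over_iff Quot_def by fastforce
  have c_eq: "c = b' - k \<cdot>\<^sub>m T"
  proof (rule eq_matI)
    fix i j assume "i < dim_row (b' - k \<cdot>\<^sub>m T)" "j < dim_col (b' - k \<cdot>\<^sub>m T)"
    then have ij: "i < n" "j < n" using b'c unfolding T_def by auto
    have "k * b' $$ (i,j) = y (k * b' $$ (i,j)) + (k * k) * T $$ (i,j)"
      using yt kb'[OF ij] ij unfolding T_def by auto
    then show "c $$ (i,j) = (b' - k \<cdot>\<^sub>m T) $$ (i,j)"
      using ij b'c k(2) unfolding c_def T_def by (simp add: field_simps)
  qed (use b'c in \<open>auto simp: c_def T_def\<close>)
  have "av ((k \<cdot>\<^sub>m b) $$ (i,l)) * av (T $$ (l,j)) < 1" if "i < n" "l < n" "j < n" for i l j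
    using \<epsilon>[OF that(1,2)] yt kb' that T U unfolding T_def Mat_over_iff ultrametric_abs_on_def
    by auto
  then show ?thesis
    using c perturbed_inverse_close_to_one[OF S U bc b'c inv X T] unfolding c_eq by blast
qed

text \<open>If b * c factors as b1 * b2 and the correction c lies over the subfield E2, then c is
  invertible over E2 and its inverse can be absorbed into the second factor.\<close>

lemma factorization_after_correction:
  assumes E2: "is_subfield E2" and b: "b \<in> GL_over n UNIV" and c: "c \<in> Mat_over n E2"
    and b1: "b1 \<in> GL_over n E1" and b2: "b2 \<in> GL_over n E2" and eq: "b * c = b1 * b2"
  shows "b \<in> {b1 * b2 | b1 b2. b1 \<in> GL_over n E1 \<and> b2 \<in> GL_over n E2}"
proof -
  have bc: "b \<in> carrier_mat n n" and cc: "c \<in> carrier_mat n n"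
    using b c GL_over_carrier unfolding Mat_over_iff by auto
  have "det b * det c = det b1 * det b2"
    using det_mult[OF bc cc] det_mult[OF GL_over_carrier[OF b1] GL_over_carrier[OF b2]] eq by simp
  then have "det c \<noteq> 0" using det_GL_over_nonzero[OF b1] det_GL_over_nonzero[OF b2] by auto
  then obtain c' where c': "c' \<in> Mat_over n E2" "c * c' = 1\<^sub>m n"
    using GL_over_if_det_nonzero[OF E2 c] unfolding GL_over_def by auto
  have c'c: "c' \<in> carrier_mat n n" using c'(1) unfolding Mat_over_iff by simp
  have "c' * c = 1\<^sub>m n" using mat_mult_left_right_inverse[OF cc c'c c'(2)] .
  then have c'GL: "c' \<in> GL_over n E2" using c' c unfolding GL_over_def by blast
  have "b = (b * c) * c'"
    using bc cc c'c c'(2) by (simp add: assoc_mult_mat[of _ n n _ n _ n])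
  also have "\<dots> = b1 * (b2 * c')"
    using eq GL_over_carrier[OF b1] GL_over_carrier[OF b2] c'c
    by (simp add: assoc_mult_mat[of _ n n _ n _ n])
  finally show ?thesis
    using b1 GL_over_mult[OF _ b2 c'GL] E2 unfolding is_subfield_def by blast
qed

theorem proposition3p2:
  fixes A A0 E1 E2 :: "'a::field set" and av :: "'a \<Rightarrow> real" and n :: nat
  assumes "is_subring A" and "Quot A = UNIV"
    and "ultrametric_abs_on A av"
    and "is_subring A0" and "A0 \<subseteq> A" and "dense_in av A0 A"
    and "\<forall>g\<in>A0. g \<noteq> 0 \<longrightarrow> A = {a0 + g * a | a0 a. a0 \<in> A0 \<and> a \<in> A}"
    and "is_subfield E1" and "is_subfield E2" and "Quot A0 \<subseteq> E2"
    and "{a / g | a g. a \<in> A \<and> g \<in> A0 \<and> g \<noteq> 0} = UNIV"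
    and "\<forall>b\<in>Mat_over n A. mat_abs_lt_1 av n b \<longrightarrow>
           (\<exists>b1\<in>GL_over n E1. \<exists>b2\<in>GL_over n E2. b = b1 * b2)"
  shows "GL_over n UNIV = {b1 * b2 | b1 b2. b1 \<in> GL_over n E1 \<and> b2 \<in> GL_over n E2}"
proof
  show "GL_over n UNIV \<subseteq> {b1 * b2 | b1 b2. b1 \<in> GL_over n E1 \<and> b2 \<in> GL_over n E2}"
  proof
    fix b assume b: "b \<in> GL_over n (UNIV :: 'a set)"
    obtain c where c: "c \<in> Mat_over n (Quot A0)"
      and close: "b * c \<in> Mat_over n A" "mat_abs_lt_1 av n (b * c)"
      using approximate_inverse[OF assms(1,3,4,5,6,7,11) b] by blast
    obtain b1 b2 where "b1 \<in> GL_over n E1" "b2 \<in> GL_over n E2" "b * c = b1 * b2"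
      using assms(12) close by blast
    moreover have "c \<in> Mat_over n E2" using c Mat_over_mono[OF assms(10)] by blast
    ultimately show "b \<in> {b1 * b2 | b1 b2. b1 \<in> GL_over n E1 \<and> b2 \<in> GL_over n E2}"
      using factorization_after_correction[OF assms(9) b] by blast
  qed
next
  have "is_subring (UNIV :: 'a set)" unfolding is_subring_def by simp
  then show "{b1 * b2 | b1 b2. b1 \<in> GL_over n E1 \<and> b2 \<in> GL_over n E2} \<subseteq> GL_over n UNIV"
    using GL_over_mult GL_over_mono[of E1 UNIV n] GL_over_mono[of E2 UNIV n] by blast
qed

end
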